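(* Let $\vec{k}=(k_1,\dots,k_\ell)$ be any vector of positive integers and let $\mathcal{K}$ be the set of all distinct rearrangements of $\vec k$. Then $$\widetilde{C}_{\mathcal{K}}(q,t)=\sum_{\pi\in\mathcal{D}_{\mathcal{K}}} q^{\mathrm{area}(\pi)}t^{\mathrm{depth}(\pi)}$$ is $q,t$-symmetric, i.e. $\widetilde{C}_{\mathcal{K}}(q,t)=\widetilde{C}_{\mathcal{K}}(t,q)$, where $\mathcal{D}_{\mathcal{K}}$ is the union of $\mathcal{D}_{\vec u}$ over $\vec u\in\mathcal{K}$.
   Context: For a vector $\vec{u}=(u_1,\dots,u_m)$ of positive integers put $|\vec u|=u_1+\cdots+u_m$ and $N=|\vec u|+m$. A $\vec u$-Dyck path is a word $\pi=\pi_1\cdots\pi_N$ containing the letters $S^{u_1},\dots,S^{u_m}$ exactly once each and in this order, together with $|\vec u|$ letters $W$, such that all starting ranks are nonnegative, where $r_1=0$, $r_{i+1}=r_i+u_j$ if $\pi_i=S^{u_j}$ and $r_{i+1}=r_i-1$ if $\pi_i=W$. $\mathcal{D}_{\vec u}$ is the set of such paths. The area sequence is $(a_1,\dots,a_m)$ with $a_j$ the starting rank of $S^{u_j}$, and $\mathrm{area}(\pi)=\sum a_j$. Filling algorithm $\eta_*$: in a tableau of $m$ top-justified columns, column $i$ having $u_i+1$ cells, place $1$ at the top of column 1; for $i=2,\dots,N$, call an entry active if it is currently the bottom entry of a column $i'$ not yet containing $u_{i'}+1$ entries; if $\pi_i=W$ place $i$ immediately below the largest active entry, otherwise place $i$ at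 the top of the first empty column. Ranking algorithm $\gamma_*$: column 1 gets ranks $0,1,\dots,u_1$ top to bottom; for $i\ge2$, if the top entry of column $i$ of $\eta_*(\pi)$ is $A+1$ and $A$ has rank $\alpha$, column $i$ gets ranks $\alpha,\dots,\alpha+u_i$ top to bottom. The depth labeling sequence $(d_1,\dots,d_m)$ is the first row of the ranking tableau and $\mathrm{depth}(\pi)=\sum d_j$. *)

theory Defs
  imports Main "HOL-Library.Multiset"
begin

text \<open>A \<open>u\<close>-Dyck path is a word over \<open>S\<close>/\<open>W\<close>; the j-th
  occurrence of \<open>S\<close> stands for the letter \<open>S^{u_j}\<close> (these letters occur exactly
  once each and in order, so the exponent is determined by the position).\<close>
datatype letter = S | W

fun start_ranks :: "int \<Rightarrow> nat list \<Rightarrow> letter list \<Rightarrow> int list" where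
  "start_ranks r us [] = []"
| "start_ranks r us (S # w) = r # start_ranks (r + int (hd us)) (tl us) w"
| "start_ranks r us (W # w) = r # start_ranks (r - 1) us w"

definition dyck_paths :: "nat list \<Rightarrow> letter list set" where
  "dyck_paths u = {w. length w = sum_list u + length u
      \<and> length (filter (\<lambda>l. l = S) w) = length u
      \<and> length (filter (\<lambda>l. l = W) w) = sum_list u
      \<and> (\<forall>r \<in> set (start_ranks 0 u w). 0 \<le> r)}"

definition area :: "nat list \<Rightarrow> letter list \<Rightarrow> nat" where
  "area u w = nat (sum_list [r. (r, l) \<leftarrow> zip (start_ranks 0 u w) w, l = S])"

text \<open>Filling algorithm \<open>\<eta>_*\<close>. The tableau is a list of \<open>m\<close> columns (0-indexed),
  each column the list of its entries from top to bottom.\<close>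
definition fill_step :: "nat list \<Rightarrow> nat \<times> letter \<Rightarrow> nat list list \<Rightarrow> nat list list" where
  "fill_step u il cols =
    (let i = fst il; l = snd il in
     if i = 1 then cols[0 := [1]]
     else (case l of
       W \<Rightarrow> (let act = {j. j < length u \<and> cols ! j \<noteq> [] \<and> length (cols ! j) < u ! j + 1};
                 mx = Max ((\<lambda>j. last (cols ! j)) ` act);
                 c = (LEAST j. j \<in> act \<and> last (cols ! j) = mx)
             in cols[c := cols ! c @ [i]])
     | S \<Rightarrow> (let c = (LEAST j. j < length u \<and> cols ! j = [])
             in cols[c := [i]])))"

definition eta :: "nat list \<Rightarrow> letter list \<Rightarrow> nat list list" where
  "eta u w = fold (fill_step u) (zip [1..<length w + 1] w) (replicate (length u) [])"

text \<open>Ranking algorithm \<open>\<gamma>_*\<close>: the top rank \<open>d_i\<close> of column \<open>i\<close>. The entry in row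
  \<open>p\<close> (0-indexed from the top) of column \<open>c\<close> has rank \<open>d_c + p\<close>.\<close>
definition depth_seq :: "nat list \<Rightarrow> letter list \<Rightarrow> nat list" where
  "depth_seq u w =
    (let cols = eta u w in
     fold (\<lambda>i ds. ds @ [if i = 0 then 0 else
              (let A = hd (cols ! i) - 1;
                   c = (LEAST c. c < length u \<and> A \<in> set (cols ! c));
                   p = (LEAST p. p < length (cols ! c) \<and> cols ! c ! p = A)
               in ds ! c + p)])
        [0..<length u] [])"

definition depth :: "nat list \<Rightarrow> letter list \<Rightarrow> nat" where
  "depth u w = sum_list (depth_seq u w)"

text \<open>\<open>\<widetilde>C_K(q,t)\<close> for \<open>K\<close> the set of distinct rearrangements of \<open>k\<close>; the
  union \<open>D_K\<close> is indexed by pairs \<open>(u, w)\<close> since the letters of a path carry the \<open>u_j\<close>.\<close>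
definition Ctilde :: "nat list \<Rightarrow> 'a::comm_ring_1 \<Rightarrow> 'a \<Rightarrow> 'a" where
  "Ctilde k q t = (\<Sum>u \<in> {u. mset u = mset k}. \<Sum>w \<in> dyck_paths u. q ^ area u w * t ^ depth u w)"

end

theory Submission
  imports Defs
begin

text \<open>A \<open>u\<close>-Dyck path is the word of a plane tree: the letter \<open>S^{u_j}\<close> is a node with
  \<open>u_j + 1\<close> ordered children, namely the excursion following it at rank \<open>a_j + u_j\<close> and,
  after each of its \<open>u_j\<close> descents \<open>W\<close> to the ranks \<open>a_j + u_j - 1, \<dots>, a_j\<close>, one further
  excursion; the labels \<open>u_j\<close> are read in preorder. So the \<open>p\<close>-th child (counting from 0) of a
  node at rank \<open>r\<close> starts at rank \<open>r + u - p\<close>. The filling algorithm opens a column for each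
  node and puts the letters \<open>W\<close> preceding its later children below the node's entry, so the
  ranking algorithm gives the \<open>p\<close>-th child the depth label of its parent plus \<open>p\<close>. Reversing
  the order of the children in every node therefore exchanges area and depth; it preserves
  the multiset of labels, hence permutes \<open>D_K\<close>.\<close>

section \<open>Plane trees and ranks\<close>

datatype ptree = Leaf | Node nat ptree "ptree list"

lemma ptree_forest_induct [case_names Leaf Node Nil Cons]:
  assumes "P Leaf" "\<And>u t0 ts. P t0 \<Longrightarrow> Q ts \<Longrightarrow> P (Node u t0 ts)" "Q []"
    "\<And>t ts. P t \<Longrightarrow> Q ts \<Longrightarrow> Q (t # ts)"
  shows "P t &&& Q ts"
proof -
  have tree: "P t" for t
  proof (induction t)
    case (Node u t0 ts)
    have "Q ts" using Node(2) by (induction ts) (auto intro: assms(3,4))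
    then show ?case using Node(1) assms(2) by blast
  qed (fact assms(1))
  show "P t" by (fact tree)
  show "Q ts" by (induction ts) (auto intro: assms(3,4) tree)
qed

primrec tree_word :: "ptree \<Rightarrow> letter list" and forest_word :: "ptree list \<Rightarrow> letter list" where
  "tree_word Leaf = []"
| "tree_word (Node u t0 ts) = S # tree_word t0 @ forest_word ts"
| "forest_word [] = []"
| "forest_word (t # ts) = W # tree_word t @ forest_word ts"

primrec labels :: "ptree \<Rightarrow> nat list" and forest_labels :: "ptree list \<Rightarrow> nat list" where
  "labels Leaf = []"
| "labels (Node u t0 ts) = u # labels t0 @ forest_labels ts"
| "forest_labels [] = []"
| "forest_labels (t # ts) = labels t @ forest_labels ts"

primrec wf_tree :: "ptree \<Rightarrow> bool" and wf_forest :: "ptree list \<Rightarrow> bool" where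
  "wf_tree Leaf = True"
| "wf_tree (Node u t0 ts) = (length ts = u \<and> wf_tree t0 \<and> wf_forest ts)"
| "wf_forest [] = True"
| "wf_forest (t # ts) = (wf_tree t \<and> wf_forest ts)"

primrec tree_area :: "int \<Rightarrow> ptree \<Rightarrow> int" and forest_area :: "int \<Rightarrow> ptree list \<Rightarrow> int" where
  "tree_area r Leaf = 0"
| "tree_area r (Node u t0 ts) = r + tree_area (r + int u) t0 + forest_area (r + int u) ts"
| "forest_area r [] = 0"
| "forest_area r (t # ts) = tree_area (r - 1) t + forest_area (r - 1) ts"

fun end_rank :: "int \<Rightarrow> nat list \<Rightarrow> letter list \<Rightarrow> int" where
  "end_rank r us [] = r"
| "end_rank r us (S # w) = end_rank (r + int (hd us)) (tl us) w"
| "end_rank r us (W # w) = end_rank (r - 1) us w"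

fun area_from :: "int \<Rightarrow> nat list \<Rightarrow> letter list \<Rightarrow> int" where
  "area_from r us [] = 0"
| "area_from r us (S # w) = r + area_from (r + int (hd us)) (tl us) w"
| "area_from r us (W # w) = area_from (r - 1) us w"

abbreviation count_S :: "letter list \<Rightarrow> nat" where
  "count_S w \<equiv> length (filter (\<lambda>l. l = S) w)"

abbreviation count_W :: "letter list \<Rightarrow> nat" where
  "count_W w \<equiv> length (filter (\<lambda>l. l = W) w)"

lemma length_eq_count_S_add_count_W: "length w = count_S w + count_W w"
proof (induction w)
  case (Cons l w) then show ?case by (cases l) auto
qed simp

lemma length_start_ranks [simp]: "length (start_ranks r us w) = length w"
  by (induction r us w rule: end_rank.induct) auto

lemma start_ranks_append:
  "start_ranks r us (w @ v)
     = start_ranks r us w @ start_ranks (end_rank r us w) (drop (count_S w) us) v"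
  by (induction r us w rule: end_rank.induct) (auto simp: drop_Suc)

lemma end_rank_append: "end_rank r us (w @ v) = end_rank (end_rank r us w) (drop (count_S w) us) v"
  by (induction r us w rule: end_rank.induct) (auto simp: drop_Suc)

lemma area_from_append:
  "area_from r us (w @ v) = area_from r us w + area_from (end_rank r us w) (drop (count_S w) us) v"
  by (induction r us w rule: end_rank.induct) (auto simp: drop_Suc)

lemma start_ranks_take_sizes: "start_ranks r (take (count_S w) us) w = start_ranks r us w"
proof (induction r us w rule: end_rank.induct)
  case (2 r us w) then show ?case by (cases us) auto
qed auto

lemma end_rank_take_sizes: "end_rank r (take (count_S w) us) w = end_rank r us w"
proof (induction r us w rule: end_rank.induct)
  case (2 r us w) then show ?case by (cases us) auto
qed auto

lemma area_from_take_sizes: "area_from r (take (count_S w) us) w = area_from r us w"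
proof (induction r us w rule: end_rank.induct)
  case (2 r us w) then show ?case by (cases us) auto
qed auto

lemma nth_start_ranks: "i < length w \<Longrightarrow> start_ranks r us w ! i = end_rank r us (take i w)"
proof (induction r us w arbitrary: i rule: end_rank.induct)
  case (2 r us w) then show ?case by (cases i) auto
next
  case (3 r us w) then show ?case by (cases i) auto
qed auto

lemma end_rank_eq:
  "count_S w \<le> length us \<Longrightarrow> end_rank r us w = r + int (sum_list (take (count_S w) us)) - int (count_W w)"
proof (induction r us w rule: end_rank.induct)
  case (2 r us w) then show ?case by (cases us) auto
qed auto

lemma sum_start_ranks_S_eq_area_from:
  "sum_list [r. (r, l) \<leftarrow> zip (start_ranks r0 us w) w, l = S] = area_from r0 us w"
  by (induction r0 us w rule: end_rank.induct) auto

lemma first_descent_split: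
  assumes "end_rank r us v < r"
  obtains v1 v2 where "v = v1 @ W # v2" "\<forall>x\<in>set (start_ranks r us v1). r \<le> x" "end_rank r us v1 = r"
proof -
  define P where "P k \<longleftrightarrow> end_rank r us (take k v) < r" for k
  have "P (length v)" using assms by (simp add: P_def)
  define k where "k = (LEAST k. P k)"
  have Pk: "P k" unfolding k_def by (rule LeastI) fact
  have k_le: "k \<le> length v" unfolding k_def by (rule Least_le) fact
  have above: "\<not> P i" if "i < k" for i using that unfolding k_def by (rule not_less_Least)
  obtain k' where k: "k = Suc k'" using Pk by (cases k) (auto simp: P_def)
  have take_k: "take k v = take k' v @ [v ! k']" using k k_le by (simp add: take_Suc_conv_app_nth)
  have ge: "r \<le> end_rank r us (take k' v)" using above[of k'] k by (simp add: P_def)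
  have W: "v ! k' = W"
  proof (cases "v ! k'")
    case S
    then show ?thesis using Pk ge take_k by (simp add: P_def end_rank_append)
  qed
  have "end_rank r us (take k' v) = r" using Pk ge take_k W by (simp add: P_def end_rank_append)
  moreover have "v = take k' v @ W # drop k v"
    using take_k W by (metis append.assoc append_Cons append_take_drop_id self_append_conv2)
  moreover have "\<forall>x\<in>set (start_ranks r us (take k' v)). r \<le> x"
    using above k k_le by (auto simp: in_set_conv_nth nth_start_ranks P_def min_def not_less)
  ultimately show ?thesis using that by blast
qed

definition descent :: "int \<Rightarrow> nat \<Rightarrow> nat list \<Rightarrow> letter list \<Rightarrow> bool" where
  "descent r j us v \<longleftrightarrow> length us = count_S v \<and> (\<forall>x\<in>set (start_ranks r us v). r - int j \<le> x)
     \<and> end_rank r us v = r - int j"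

lemma dyck_paths_iff_descent: "w \<in> dyck_paths u \<longleftrightarrow> descent 0 0 u w"
  using end_rank_eq[of w u 0] length_eq_count_S_add_count_W[of w]
  by (auto simp: dyck_paths_def descent_def)

lemma descent_Nil: "descent r j us [] \<longleftrightarrow> us = [] \<and> j = 0"
  by (auto simp: descent_def)

lemma descent_S_Cons: "descent r j (u # us) (S # v) \<longleftrightarrow> descent (r + int u) (u + j) us v"
  by (auto simp: descent_def)

lemma descent_W_Cons: "descent r j us (W # v) \<longleftrightarrow> 0 < j \<and> descent (r - 1) (j - 1) us v"
proof (cases v)
  case (Cons l v')
  then show ?thesis by (cases l; cases j) (auto simp: descent_def)
qed (auto simp: descent_def)

lemma ranks_append_sizes:
  assumes "length us = count_S v"
  shows "start_ranks r (us @ us') (v @ v') = start_ranks r us v @ start_ranks (end_rank r us v) us' v'"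
    and "end_rank r (us @ us') (v @ v') = end_rank (end_rank r us v) us' v'"
    and "area_from r (us @ us') (v @ v') = area_from r us v + area_from (end_rank r us v) us' v'"
  using assms start_ranks_take_sizes[of r v "us @ us'"] end_rank_take_sizes[of r v "us @ us'"]
    area_from_take_sizes[of r v "us @ us'"]
  by (simp_all add: start_ranks_append end_rank_append area_from_append)

lemma descent_append:
  "descent r j us v \<Longrightarrow> descent (r - int j) k us' v' \<Longrightarrow> descent r (j + k) (us @ us') (v @ v')"
  by (auto simp: descent_def ranks_append_sizes)

lemma descent_Suc_split:
  assumes "descent r (Suc j) us v"
  obtains v1 v2 where "v = v1 @ W # v2" "descent r 0 (take (count_S v1) us) v1"
    "descent (r - 1) j (drop (count_S v1) us) v2"
proof -
  have "end_rank r us v < r" using assms by (simp add: descent_def)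
  then obtain v1 v2 where v: "v = v1 @ W # v2" and v1: "\<forall>x\<in>set (start_ranks r us v1). r \<le> x"
    "end_rank r us v1 = r"
    by (rule first_descent_split)
  have "descent r 0 (take (count_S v1) us) v1"
    using assms v v1 by (simp add: descent_def start_ranks_take_sizes end_rank_take_sizes)
  moreover have "descent (r - 1) j (drop (count_S v1) us) v2"
    using assms v v1 by (auto simp: descent_def start_ranks_append end_rank_append diff_diff_eq)
  ultimately show ?thesis using that v by blast
qed

section \<open>Dyck paths as words of trees\<close>

text \<open>A word descending from \<open>r\<close> to \<open>r - j\<close> splits at its first visits to \<open>r - 1, \<dots>, r - j\<close>
  into an excursion followed by \<open>j\<close> letters \<open>W\<close>, each followed by an excursion; an excursion
  starting with \<open>S^u\<close> continues with a descent from \<open>r + u\<close> to \<open>r\<close>.\<close>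
lemma forest_of_descent:
  "descent r j us v \<Longrightarrow> \<exists>t0 ts. length ts = j \<and> wf_tree t0 \<and> wf_forest ts
    \<and> labels t0 @ forest_labels ts = us \<and> tree_word t0 @ forest_word ts = v"
proof (induction "length v" arbitrary: v r us j rule: less_induct)
  case less
  show ?case
  proof (cases j)
    case 0
    show ?thesis
    proof (cases v)
      case Nil
      then show ?thesis using less.prems 0
        by (intro exI[of _ Leaf] exI[of _ "[]"]) (simp add: descent_Nil)
    next
      case (Cons l v')
      then have "l = S" using less.prems 0 by (cases l) (simp_all add: descent_W_Cons)
      moreover obtain u us' where "us = u # us'"
        using less.prems Cons \<open>l = S\<close> by (cases us) (simp_all add: descent_def)
      ultimately have "descent (r + int u) u us' v'" using less.prems Cons 0
        by (simp add: descent_S_Cons)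
      then obtain t0 ts where "length ts = u" "wf_tree t0" "wf_forest ts"
        "labels t0 @ forest_labels ts = us'" "tree_word t0 @ forest_word ts = v'"
        using less.hyps[of v' "r + int u" u us'] Cons by auto
      then show ?thesis using Cons \<open>l = S\<close> \<open>us = u # us'\<close> 0
        by (intro exI[of _ "Node u t0 ts"] exI[of _ "[]"]) auto
    qed
  next
    case (Suc j')
    then obtain v1 v2 where v: "v = v1 @ W # v2" and "descent r 0 (take (count_S v1) us) v1"
      "descent (r - 1) j' (drop (count_S v1) us) v2"
      using less.prems by (blast elim: descent_Suc_split)
    obtain t1 ts1 where t1: "length ts1 = 0" "wf_tree t1" "wf_forest ts1"
      "labels t1 @ forest_labels ts1 = take (count_S v1) us" "tree_word t1 @ forest_word ts1 = v1"
      using less.hyps[of v1 r 0 "take (count_S v1) us"] \<open>descent r 0 (take (count_S v1) us) v1\<close> v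
      by auto
    obtain t0 ts where "length ts = j'" "wf_tree t0" "wf_forest ts"
      "labels t0 @ forest_labels ts = drop (count_S v1) us" "tree_word t0 @ forest_word ts = v2"
      using less.hyps[of v2 "r - 1" j' "drop (count_S v1) us"] \<open>descent (r - 1) j' _ v2\<close> v by auto
    moreover have "us = take (count_S v1) us @ drop (count_S v1) us" by simp
    ultimately show ?thesis using t1 v Suc by (intro exI[of _ t1] exI[of _ "t0 # ts"]) auto
  qed
qed

lemma tree_word_descent:
  "wf_tree t \<Longrightarrow> \<forall>r. descent r 0 (labels t) (tree_word t)
     \<and> area_from r (labels t) (tree_word t) = tree_area r t"
  "wf_forest ts \<Longrightarrow> \<forall>r. descent r (length ts) (forest_labels ts) (forest_word ts)
     \<and> area_from r (forest_labels ts) (forest_word ts) = forest_area r ts"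
proof (induct t and ts rule: ptree_forest_induct)
  case (Node u t0 ts)
  show ?case
  proof
    fix r
    have "descent (r + int u) 0 (labels t0) (tree_word t0)"
      "descent (r + int u) u (forest_labels ts) (forest_word ts)"
      and "area_from (r + int u) (labels t0) (tree_word t0) = tree_area (r + int u) t0"
      "area_from (r + int u) (forest_labels ts) (forest_word ts) = forest_area (r + int u) ts"
      using Node by auto
    then show "descent r 0 (labels (Node u t0 ts)) (tree_word (Node u t0 ts))
        \<and> area_from r (labels (Node u t0 ts)) (tree_word (Node u t0 ts)) = tree_area r (Node u t0 ts)"
      using descent_append[of "r + int u" 0 "labels t0" "tree_word t0"]
      by (auto simp: descent_S_Cons ranks_append_sizes descent_def[of _ 0])
  qed
next
  case (Cons t ts)
  show ?case
  proof
    fix r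
    have "descent (r - 1) 0 (labels t) (tree_word t)"
      "descent (r - 1) (length ts) (forest_labels ts) (forest_word ts)"
      and "area_from (r - 1) (labels t) (tree_word t) = tree_area (r - 1) t"
      "area_from (r - 1) (forest_labels ts) (forest_word ts) = forest_area (r - 1) ts"
      using Cons by auto
    then show "descent r (length (t # ts)) (forest_labels (t # ts)) (forest_word (t # ts))
        \<and> area_from r (forest_labels (t # ts)) (forest_word (t # ts)) = forest_area r (t # ts)"
      using descent_append[of "r - 1" 0 "labels t" "tree_word t"]
      by (auto simp: descent_W_Cons ranks_append_sizes descent_def[of _ 0])
  qed
qed (auto simp: descent_Nil)

lemma tree_word_in_dyck_paths: "wf_tree t \<Longrightarrow> tree_word t \<in> dyck_paths (labels t)"
  using tree_word_descent(1) by (simp add: dyck_paths_iff_descent)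

lemma dyck_path_is_tree_word:
  assumes "w \<in> dyck_paths u"
  obtains t where "wf_tree t" "labels t = u" "tree_word t = w"
  using forest_of_descent[of 0 0 u w] assms that by (auto simp: dyck_paths_iff_descent)

lemma area_tree_word: "wf_tree t \<Longrightarrow> area (labels t) (tree_word t) = nat (tree_area 0 t)"
  using tree_word_descent(1) by (simp add: area_def sum_start_ranks_S_eq_area_from)

lemma forest_word_append_not_S:
  "w = [] \<or> hd w \<noteq> S \<Longrightarrow> forest_word ts @ w = [] \<or> hd (forest_word ts @ w) \<noteq> S"
  by (cases ts) auto

text \<open>The words are compared together with arbitrary continuations not starting with \<open>S\<close>,
  since the word of a forest is cut at the letters \<open>W\<close>.\<close>
lemma tree_word_append_inj:
  "\<forall>t' w w' us us'. wf_tree t \<longrightarrow> wf_tree t' \<longrightarrow> tree_word t @ w = tree_word t' @ w'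
     \<longrightarrow> labels t @ us = labels t' @ us' \<longrightarrow> (w = [] \<or> hd w \<noteq> S) \<longrightarrow> (w' = [] \<or> hd w' \<noteq> S)
     \<longrightarrow> t = t' \<and> w = w' \<and> us = us'"
  "\<forall>ts' w w' us us'. wf_forest ts \<longrightarrow> wf_forest ts' \<longrightarrow> length ts = length ts'
     \<longrightarrow> forest_word ts @ w = forest_word ts' @ w' \<longrightarrow> forest_labels ts @ us = forest_labels ts' @ us'
     \<longrightarrow> (w = [] \<or> hd w \<noteq> S) \<longrightarrow> (w' = [] \<or> hd w' \<noteq> S) \<longrightarrow> ts = ts' \<and> w = w' \<and> us = us'"
proof (induct t and ts rule: ptree_forest_induct)
  case Leaf
  show ?case
  proof (intro allI impI)
    fix t' w w' us us'
    assume "tree_word Leaf @ w = tree_word t' @ w'" "labels Leaf @ us = labels t' @ us'"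
      "w = [] \<or> hd w \<noteq> S"
    then show "Leaf = t' \<and> w = w' \<and> us = us'" by (cases t') auto
  qed
next
  case (Node u t0 ts)
  show ?case
  proof (intro allI impI)
    fix t' w w' us us'
    assume wf: "wf_tree (Node u t0 ts)" "wf_tree t'"
      and eq: "tree_word (Node u t0 ts) @ w = tree_word t' @ w'"
        "labels (Node u t0 ts) @ us = labels t' @ us'"
      and ends: "w = [] \<or> hd w \<noteq> S" "w' = [] \<or> hd w' \<noteq> S"
    obtain t0' ts' where t': "t' = Node u t0' ts'" using eq ends by (cases t') auto
    have "t0 = t0' \<and> forest_word ts @ w = forest_word ts' @ w'
        \<and> forest_labels ts @ us = forest_labels ts' @ us'"
      using Node.hyps(1)[rule_format, of t0' "forest_word ts @ w" "forest_word ts' @ w'"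
          "forest_labels ts @ us" "forest_labels ts' @ us'"]
        wf eq ends[THEN forest_word_append_not_S] unfolding t' by simp
    moreover have "ts = ts' \<and> w = w' \<and> us = us'"
      using Node.hyps(2)[rule_format, of ts' w w' us us'] wf calculation ends unfolding t' by simp
    ultimately show "Node u t0 ts = t' \<and> w = w' \<and> us = us'" unfolding t' by simp
  qed
next
  case (Cons t ts)
  show ?case
  proof (intro allI impI)
    fix ts' w w' us us'
    assume wf: "wf_forest (t # ts)" "wf_forest ts'" "length (t # ts) = length ts'"
      and eq: "forest_word (t # ts) @ w = forest_word ts' @ w'"
        "forest_labels (t # ts) @ us = forest_labels ts' @ us'"
      and ends: "w = [] \<or> hd w \<noteq> S" "w' = [] \<or> hd w' \<noteq> S"
    obtain t' ts'' where ts': "ts' = t' # ts''" using wf(3) by (cases ts') auto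
    have "t = t' \<and> forest_word ts @ w = forest_word ts'' @ w'
        \<and> forest_labels ts @ us = forest_labels ts'' @ us'"
      using Cons.hyps(1)[rule_format, of t' "forest_word ts @ w" "forest_word ts'' @ w'"
          "forest_labels ts @ us" "forest_labels ts'' @ us'"]
        wf eq ends[THEN forest_word_append_not_S] unfolding ts' by simp
    moreover have "ts = ts'' \<and> w = w' \<and> us = us'"
      using Cons.hyps(2)[rule_format, of ts'' w w' us us'] wf calculation ends unfolding ts' by simp
    ultimately show "t # ts = ts' \<and> w = w' \<and> us = us'" unfolding ts' by simp
  qed
qed simp

lemma tree_word_inj:
  "wf_tree t \<Longrightarrow> wf_tree t' \<Longrightarrow> tree_word t = tree_word t' \<Longrightarrow> labels t = labels t' \<Longrightarrow> t = t'"
  using tree_word_append_inj(1)[rule_format, of t t' "[]" "[]" "[]" "[]"] by simp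

section \<open>The filling algorithm on words of trees\<close>

text \<open>The tableau of the filling algorithm, with entries numbered from \<open>e\<close>: the column of a
  node consists of the position of its letter \<open>S\<close> followed by the positions of the letters
  \<open>W\<close> opening its later children. \<open>forest_columns\<close> returns the latter together with the
  columns of the subtrees.\<close>
primrec columns :: "nat \<Rightarrow> ptree \<Rightarrow> nat list list"
  and forest_columns :: "nat \<Rightarrow> ptree list \<Rightarrow> nat list \<times> nat list list" where
  "columns e Leaf = []"
| "columns e (Node u t0 ts) =
    (e # fst (forest_columns (e + 1 + length (tree_word t0)) ts))
      # columns (Suc e) t0 @ snd (forest_columns (e + 1 + length (tree_word t0)) ts)"
| "forest_columns e [] = ([], [])"
| "forest_columns e (t # ts) =
    (e # fst (forest_columns (e + 1 + length (tree_word t)) ts),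
     columns (Suc e) t @ snd (forest_columns (e + 1 + length (tree_word t)) ts))"

lemma length_columns:
  "\<forall>e. length (columns e t) = length (labels t)"
  "\<forall>e. length (fst (forest_columns e ts)) = length ts
     \<and> length (snd (forest_columns e ts)) = length (forest_labels ts)"
  by (induct t and ts rule: ptree_forest_induct) auto

lemma map_length_columns:
  "wf_tree t \<Longrightarrow> \<forall>e. map length (columns e t) = map Suc (labels t)"
  "wf_forest ts \<Longrightarrow> \<forall>e. map length (snd (forest_columns e ts)) = map Suc (forest_labels ts)"
  by (induct t and ts rule: ptree_forest_induct) (auto simp: length_columns)

lemma mset_upt_append: "a \<le> b \<Longrightarrow> b \<le> c \<Longrightarrow> mset [a..<c] = mset [a..<b] + mset [b..<c]"
  by (metis le_Suc_ex mset_append upt_add_eq_append)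

lemma mset_concat_columns:
  "\<forall>e. mset (concat (columns e t)) = mset [e..<e + length (tree_word t)]"
  "\<forall>e. mset (fst (forest_columns e ts)) + mset (concat (snd (forest_columns e ts)))
     = mset [e..<e + length (forest_word ts)]"
proof (induct t and ts rule: ptree_forest_induct)
  case (Node u t0 ts)
  show ?case
  proof
    fix e
    let ?e' = "e + 1 + length (tree_word t0)"
    have "mset (concat (columns e (Node u t0 ts)))
        = add_mset e (mset [Suc e..<?e'] + mset [?e'..<?e' + length (forest_word ts)])"
      using Node by (simp del: mset_upt)
    also have "\<dots> = add_mset e (mset [Suc e..<?e' + length (forest_word ts)])"
      by (subst mset_upt_append[of "Suc e" ?e' "?e' + length (forest_word ts)"]) auto
    also have "\<dots> = mset [e..<e + length (tree_word (Node u t0 ts))]"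
      by (simp add: upt_conv_Cons add.assoc del: upt_Suc mset_upt)
    finally show "mset (concat (columns e (Node u t0 ts)))
        = mset [e..<e + length (tree_word (Node u t0 ts))]" .
  qed
next
  case (Cons t ts)
  show ?case
  proof
    fix e
    let ?e' = "e + 1 + length (tree_word t)"
    have "mset (fst (forest_columns e (t # ts))) + mset (concat (snd (forest_columns e (t # ts))))
        = add_mset e (mset [Suc e..<?e'] + mset [?e'..<?e' + length (forest_word ts)])"
      using Cons by (simp del: mset_upt)
    also have "\<dots> = add_mset e (mset [Suc e..<?e' + length (forest_word ts)])"
      by (subst mset_upt_append[of "Suc e" ?e' "?e' + length (forest_word ts)"]) auto
    also have "\<dots> = mset [e..<e + length (forest_word (t # ts))]"
      by (simp add: upt_conv_Cons add.assoc del: upt_Suc mset_upt)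
    finally show "mset (fst (forest_columns e (t # ts)))
        + mset (concat (snd (forest_columns e (t # ts))))
        = mset [e..<e + length (forest_word (t # ts))]" .
  qed
qed auto

lemma distinct_concat_columns: "distinct (concat (columns e t))"
  using mset_concat_columns(1)[rule_format, of e t] by (metis distinct_upt mset_eq_imp_distinct_iff)

lemma in_columns_less:
  assumes "k < length (labels t)" "x \<in> set (columns e t ! k)"
  shows "x < e + length (tree_word t)"
proof -
  have "x \<in> set (concat (columns e t))" using assms length_columns(1) by (auto intro!: nth_mem)
  then have "x \<in># mset [e..<e + length (tree_word t)]"
    unfolding mset_concat_columns(1)[rule_format, symmetric] by simp
  then show ?thesis by (simp del: mset_upt)
qed

lemma length_columns_nth:
  "wf_tree t \<Longrightarrow> k < length (labels t) \<Longrightarrow> length (columns e t ! k) = Suc (labels t ! k)"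
  using map_length_columns(1)[of t] length_columns(1) by (metis nth_map)

definition active_column :: "nat list \<Rightarrow> nat list list \<Rightarrow> nat \<Rightarrow> bool" where
  "active_column U st j \<longleftrightarrow> j < length U \<and> st ! j \<noteq> [] \<and> length (st ! j) < U ! j + 1"

definition largest_active :: "nat list \<Rightarrow> nat list list \<Rightarrow> nat \<Rightarrow> bool" where
  "largest_active U st c \<longleftrightarrow> (\<forall>j. active_column U st j \<longrightarrow> j \<noteq> c \<longrightarrow> last (st ! j) < last (st ! c))"

definition fill_inv :: "nat list \<Rightarrow> nat list list \<Rightarrow> nat \<Rightarrow> nat \<Rightarrow> bool" where
  "fill_inv U st c e \<longleftrightarrow> length st = length U \<and> (\<forall>j<c. st ! j \<noteq> [])
     \<and> (\<forall>j. c \<le> j \<longrightarrow> j < length U \<longrightarrow> st ! j = []) \<and> (\<forall>j<length U. \<forall>x\<in>set (st ! j). x < e)"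

lemma fill_step_S:
  assumes "fill_inv U st c e" "c < length U" "e = 1 \<longrightarrow> c = 0"
  shows "fill_step U (e, S) st = st[c := [e]]"
proof (cases "e = 1")
  case False
  have "(LEAST j. j < length U \<and> st ! j = []) = c"
    using assms by (intro Least_equality) (auto simp: fill_inv_def not_less[symmetric])
  then show ?thesis using False by (simp add: fill_step_def)
qed (use assms in \<open>simp add: fill_step_def\<close>)

lemma fill_step_W:
  assumes "i \<noteq> 1" "active_column U st c" "largest_active U st c"
  shows "fill_step U (i, W) st = st[c := st ! c @ [i]]"
proof -
  define act where "act = {j. active_column U st j}"
  have c: "c \<in> act" using assms(2) by (simp add: act_def)
  have "finite act" by (auto simp: act_def active_column_def)
  then have max: "Max ((\<lambda>j. last (st ! j)) ` act) = last (st ! c)"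
    using assms(3) c by (intro Max_eqI) (auto simp: act_def largest_active_def less_imp_le)
  have "(LEAST j. j \<in> act \<and> last (st ! j) = last (st ! c)) = c"
    using assms(3) c by (intro Least_equality) (auto simp: act_def largest_active_def)
  then show ?thesis
    using assms(1) max unfolding fill_step_def act_def active_column_def by simp
qed

lemma fold_zip_upt_Cons_append:
  "fold f (zip [e..<e + length (l # v @ w)] (l # v @ w)) st
     = fold f (zip [Suc e + length v..<Suc e + length v + length w] w)
         (fold f (zip [Suc e..<Suc e + length v] v) (f (e, l) st))"
proof -
  have "[e..<e + length (l # v @ w)] = e # [Suc e..<Suc e + length v + length w]"
    by (simp add: upt_conv_Cons add.assoc del: upt_Suc)
  also have "[Suc e..<Suc e + length v + length w]
      = [Suc e..<Suc e + length v] @ [Suc e + length v..<Suc e + length v + length w]"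
    by (rule upt_add_eq_append) simp
  finally show ?thesis by (simp add: zip_append del: upt_Suc)
qed

lemma fill_inv_subtree_columns:
  assumes inv: "fill_inv U st c e" and wf: "wf_tree t" and U: "U = U0 @ labels t @ U'" "length U0 = c"
  defines "st' \<equiv> take c st @ columns e t @ drop (c + length (labels t)) st"
  shows "fill_inv U st' (c + length (labels t)) (e + length (tree_word t))"
    and "active_column U st' j \<Longrightarrow> j < c \<and> st' ! j = st ! j"
proof -
  define n where "n = length (labels t)"
  have len_st: "length st = length U" using inv by (simp add: fill_inv_def)
  have cn: "c + n \<le> length U" using U by (simp add: n_def)
  have nth_st': "st' ! j
      = (if j < c then st ! j else if j < c + n then columns e t ! (j - c) else st ! j)"
    if "j < length U" for j
    using that cn len_st length_columns(1) by (auto simp: st'_def n_def nth_append min_def)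
  have full: "length (st' ! j) = U ! j + 1" if "c \<le> j" "j < c + n" for j
  proof -
    have k: "j - c < n" using that by simp
    then have "U ! j = labels t ! (j - c)" using that U by (simp add: nth_append n_def)
    then show ?thesis using that cn nth_st'[of j] length_columns_nth[OF wf, of "j - c" e] k
      by (simp add: n_def)
  qed
  show "fill_inv U st' (c + length (labels t)) (e + length (tree_word t))"
    unfolding fill_inv_def n_def[symmetric]
  proof (intro conjI allI impI ballI)
    show "length st' = length U" using len_st cn length_columns(1) by (simp add: st'_def n_def)
  next
    fix j assume "j < c + n"
    then show "st' ! j \<noteq> []" using inv full[of j] cn nth_st'[of j]
      by (cases "j < c") (auto simp: fill_inv_def)
  next
    fix j assume "c + n \<le> j" "j < length U"
    then show "st' ! j = []" using inv nth_st' by (simp add: fill_inv_def)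
  next
    fix j x assume j: "j < length U" and x: "x \<in> set (st' ! j)"
    show "x < e + length (tree_word t)"
    proof (cases "j < c \<or> c + n \<le> j")
      case True
      then have "x \<in> set (st ! j)" using x nth_st'[OF j] by auto
      then show ?thesis using inv j by (fastforce simp: fill_inv_def)
    next
      case False
      then show ?thesis using x nth_st'[OF j] in_columns_less[of "j - c" t x e]
        by (auto simp: n_def)
    qed
  qed
  assume act: "active_column U st' j"
  then have "j < c \<or> c + n \<le> j" using full[of j] by (force simp: active_column_def)
  moreover have "\<not> c + n \<le> j" using act inv nth_st'[of j]
    by (auto simp: active_column_def fill_inv_def)
  ultimately show "j < c \<and> st' ! j = st ! j" using act nth_st'[of j]
    by (auto simp: active_column_def)
qed

lemma fill_inv_entry_subtree:
  assumes inv1: "fill_inv U (st[c := st ! c @ [e]]) (length U1) (Suc e)"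
    and below: "\<forall>j<length U. \<forall>x\<in>set (st ! j). x < e" and c: "c < length U1"
    and wf: "wf_tree t" and U: "U = U1 @ labels t @ U'" and len_st: "length st = length U"
  defines "st1 \<equiv> st[c := st ! c @ [e]]"
  defines "st2 \<equiv> take (length U1) st1 @ columns (Suc e) t @ drop (length U1 + length (labels t)) st1"
  shows "fill_inv U st2 (length U1 + length (labels t)) (Suc e + length (tree_word t))"
    and "st2 ! c = st ! c @ [e]" and "largest_active U st2 c"
proof -
  show "fill_inv U st2 (length U1 + length (labels t)) (Suc e + length (tree_word t))"
    using fill_inv_subtree_columns(1)[OF inv1 wf U refl] by (simp add: st1_def st2_def)
  show st2_c: "st2 ! c = st ! c @ [e]" using c U len_st by (simp add: st2_def st1_def nth_append)
  show "largest_active U st2 c"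
    unfolding largest_active_def
  proof (intro allI impI)
    fix j assume act: "active_column U st2 j" "j \<noteq> c"
    then have "st2 ! j = st ! j"
      using fill_inv_subtree_columns(2)[OF inv1 wf U refl, of j] by (simp add: st1_def st2_def)
    then have "last (st2 ! j) \<in> set (st ! j)" "j < length U"
      using act(1) by (auto simp: active_column_def)
    then show "last (st2 ! j) < last (st2 ! c)" using below st2_c by simp
  qed
qed

text \<open>\<open>fill_step\<close> puts the entry \<open>1\<close> at the top of column \<open>0\<close> whatever the state, whence
  the condition for \<open>e = 1\<close>.\<close>
definition fill_tree_spec :: "nat list \<Rightarrow> ptree \<Rightarrow> bool" where
  "fill_tree_spec U t \<longleftrightarrow> (\<forall>e st U0 U'. fill_inv U st (length U0) e \<longrightarrow> U = U0 @ labels t @ U'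
     \<longrightarrow> 0 < e \<longrightarrow> (e = 1 \<longrightarrow> U0 = [])
     \<longrightarrow> fold (fill_step U) (zip [e..<e + length (tree_word t)] (tree_word t)) st
        = take (length U0) st @ columns e t @ drop (length U0 + length (labels t)) st)"

text \<open>The letters \<open>W\<close> of a forest are appended to the parent's column \<open>c\<close>: it is the active
  column with the largest bottom entry, because the columns of the subtrees written since that
  entry are full and all other columns were filled earlier.\<close>
definition fill_forest_spec :: "nat list \<Rightarrow> ptree list \<Rightarrow> bool" where
  "fill_forest_spec U ts \<longleftrightarrow> (\<forall>e st c U0 U'. fill_inv U st (length U0) e
     \<longrightarrow> U = U0 @ forest_labels ts @ U' \<longrightarrow> c < length U0 \<longrightarrow> st ! c \<noteq> []
     \<longrightarrow> length (st ! c) + length ts = U ! c + 1 \<longrightarrow> largest_active U st c \<longrightarrow> 1 < e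
     \<longrightarrow> fold (fill_step U) (zip [e..<e + length (forest_word ts)] (forest_word ts)) st
        = (take (length U0) st @ snd (forest_columns e ts)
           @ drop (length U0 + length (forest_labels ts)) st)[c := st ! c @ fst (forest_columns e ts)])"

lemma fill_tree_spec_Node:
  assumes wf: "length ts = u" "wf_tree t0" and IH: "fill_tree_spec U t0" "fill_forest_spec U ts"
  shows "fill_tree_spec U (Node u t0 ts)"
  unfolding fill_tree_spec_def
proof (intro allI impI)
  fix e st U0 U'
  assume inv: "fill_inv U st (length U0) e" and U: "U = U0 @ labels (Node u t0 ts) @ U'"
    and e: "0 < e" "e = 1 \<longrightarrow> U0 = []"
  define c where "c = length U0"
  define e' where "e' = Suc e + length (tree_word t0)"
  define U1 where "U1 = U0 @ [u]"
  define st1 where "st1 = st[c := st ! c @ [e]]"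
  define st2 where
    "st2 = take (length U1) st1 @ columns (Suc e) t0 @ drop (length U1 + length (labels t0)) st1"
  have c_U: "c < length U" "U ! c = u" and len_st: "length st = length U" and "st ! c = []"
    using U inv by (simp_all add: c_def fill_inv_def)
  then have step: "fill_step U (e, S) st = st1"
    using fill_step_S[of U st c e] inv e(2) by (simp add: st1_def c_def)
  have inv1: "fill_inv U st1 (length U1) (Suc e)"
    using inv c_U \<open>st ! c = []\<close>
    unfolding fill_inv_def by (auto simp: st1_def U1_def c_def nth_list_update less_Suc_eq)
  have U1: "U = U1 @ labels t0 @ forest_labels ts @ U'" using U by (simp add: U1_def)
  have sub: "fold (fill_step U) (zip [Suc e..<Suc e + length (tree_word t0)] (tree_word t0)) st1 = st2"
    using IH(1)[unfolded fill_tree_spec_def, rule_format, OF inv1 U1] e(1)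
    by (simp add: st2_def U1_def del: upt_Suc)
  have inv2: "fill_inv U st2 (length (U1 @ labels t0)) e'" and "st2 ! c = [e]" "largest_active U st2 c"
    using fill_inv_entry_subtree[of U st c e U1 t0 "forest_labels ts @ U'"] inv1 inv c_U len_st U1 wf
      \<open>st ! c = []\<close> by (simp_all add: st1_def st2_def fill_inv_def U1_def c_def e'_def)
  then have rest: "fold (fill_step U) (zip [e'..<e' + length (forest_word ts)] (forest_word ts)) st2
      = (take (length U1 + length (labels t0)) st2 @ snd (forest_columns e' ts)
         @ drop (length U1 + length (labels t0) + length (forest_labels ts)) st2)
        [c := [e] @ fst (forest_columns e' ts)]"
    using IH(2)[unfolded fill_forest_spec_def, rule_format, OF inv2, of U' c] U c_U wf e(1)
    by (simp add: U1_def c_def e'_def del: upt_Suc)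
  have "take (length U1 + length (labels t0)) st2 = take c st @ [e] # columns (Suc e) t0"
    using c_U len_st length_columns(1) \<open>st ! c = []\<close>
    by (simp add: st2_def st1_def U1_def c_def take_Suc_conv_app_nth take_update_swap
        list_update_append)
  moreover have "drop (length U1 + length (labels t0) + length (forest_labels ts)) st2
      = drop (c + length (labels (Node u t0 ts))) st"
    using c_U len_st length_columns(1) by (simp add: st2_def st1_def U1_def c_def ac_simps)
  ultimately show "fold (fill_step U)
        (zip [e..<e + length (tree_word (Node u t0 ts))] (tree_word (Node u t0 ts))) st
      = take (length U0) st @ columns e (Node u t0 ts)
        @ drop (length U0 + length (labels (Node u t0 ts))) st"
    unfolding tree_word.simps fold_zip_upt_Cons_append step sub
    using rest c_U len_st by (simp add: e'_def c_def list_update_append del: upt_Suc)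
qed

lemma fill_forest_spec_Cons:
  assumes wf: "wf_tree t" and IH: "fill_tree_spec U t" "fill_forest_spec U ts"
  shows "fill_forest_spec U (t # ts)"
  unfolding fill_forest_spec_def
proof (intro allI impI)
  fix e st c U0 U'
  assume inv: "fill_inv U st (length U0) e" and U: "U = U0 @ forest_labels (t # ts) @ U'"
    and c: "c < length U0" and ne: "st ! c \<noteq> []"
    and len: "length (st ! c) + length (t # ts) = U ! c + 1"
    and largest: "largest_active U st c" and e: "1 < e"
  define e' where "e' = Suc e + length (tree_word t)"
  define st1 where "st1 = st[c := st ! c @ [e]]"
  define st2 where
    "st2 = take (length U0) st1 @ columns (Suc e) t @ drop (length U0 + length (labels t)) st1"
  have len_st: "length st = length U" using inv by (simp add: fill_inv_def)
  have c_U: "c < length U" and U0_le: "length U0 + length (labels t) \<le> length U" using U c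
    by simp_all
  have U0: "U = U0 @ labels t @ forest_labels ts @ U'" using U by simp
  have step: "fill_step U (e, W) st = st1"
    using fill_step_W[of e U st c] e c_U ne len largest by (simp add: st1_def active_column_def)
  have inv1: "fill_inv U st1 (length U0) (Suc e)"
    using inv c c_U len_st unfolding fill_inv_def
    by (auto simp: st1_def nth_list_update less_Suc_eq)
  have sub: "fold (fill_step U) (zip [Suc e..<Suc e + length (tree_word t)] (tree_word t)) st1 = st2"
    using IH(1)[unfolded fill_tree_spec_def, rule_format, OF inv1 U0] e
    by (simp add: st2_def del: upt_Suc)
  have inv2: "fill_inv U st2 (length (U0 @ labels t)) e'"
    and "st2 ! c = st ! c @ [e]" "largest_active U st2 c"
    using fill_inv_entry_subtree[of U st c e U0 t "forest_labels ts @ U'"] inv1 inv c U0 wf len_st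
    by (simp_all add: st1_def st2_def fill_inv_def e'_def)
  then have rest: "fold (fill_step U) (zip [e'..<e' + length (forest_word ts)] (forest_word ts)) st2
      = (take (length U0 + length (labels t)) st2 @ snd (forest_columns e' ts)
         @ drop (length U0 + length (labels t) + length (forest_labels ts)) st2)
        [c := (st ! c @ [e]) @ fst (forest_columns e' ts)]"
    using IH(2)[unfolded fill_forest_spec_def, rule_format, OF inv2, of U' c] U c len e
    by (simp add: e'_def del: upt_Suc)
  have "take (length U0 + length (labels t)) st2
      = (take (length U0) st)[c := st ! c @ [e]] @ columns (Suc e) t"
    using c c_U U0_le len_st length_columns(1) by (simp add: st2_def st1_def take_update_swap)
  moreover have "drop (length U0 + length (labels t) + length (forest_labels ts)) st2
      = drop (length U0 + length (forest_labels (t # ts))) st"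
    using c c_U U0_le len_st length_columns(1) by (simp add: st2_def st1_def ac_simps)
  ultimately show "fold (fill_step U)
        (zip [e..<e + length (forest_word (t # ts))] (forest_word (t # ts))) st
      = (take (length U0) st @ snd (forest_columns e (t # ts))
         @ drop (length U0 + length (forest_labels (t # ts))) st)
        [c := st ! c @ fst (forest_columns e (t # ts))]"
    unfolding forest_word.simps fold_zip_upt_Cons_append step sub
    using rest c c_U len_st by (simp add: e'_def list_update_append del: upt_Suc)
qed

lemma fill_spec:
  "wf_tree t \<Longrightarrow> fill_tree_spec U t"
  "wf_forest ts \<Longrightarrow> fill_forest_spec U ts"
proof (induct t and ts rule: ptree_forest_induct)
  case (Node u t0 ts)
  then show ?case by (auto intro: fill_tree_spec_Node)
next
  case (Cons t ts)
  then show ?case by (auto intro: fill_forest_spec_Cons)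
qed (simp_all add: fill_tree_spec_def fill_forest_spec_def)

lemma eta_tree_word:
  assumes "wf_tree t"
  shows "eta (labels t) (tree_word t) = columns 1 t"
proof -
  have "fill_inv (labels t) (replicate (length (labels t)) []) (length []) 1"
    by (simp add: fill_inv_def)
  from fill_spec(1)[OF assms, unfolded fill_tree_spec_def, rule_format, OF this] show ?thesis
    by (simp add: eta_def add.commute)
qed

section \<open>Depth labels\<close>

primrec depths :: "nat \<Rightarrow> ptree \<Rightarrow> nat list" and forest_depths :: "nat \<Rightarrow> ptree list \<Rightarrow> nat list" where
  "depths d Leaf = []"
| "depths d (Node u t0 ts) = d # depths d t0 @ forest_depths (Suc d) ts"
| "forest_depths d [] = []"
| "forest_depths d (t # ts) = depths d t @ forest_depths (Suc d) ts"

lemma length_depths: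
  "\<forall>d. length (depths d t) = length (labels t)"
  "\<forall>d. length (forest_depths d ts) = length (forest_labels ts)"
  by (induct t and ts rule: ptree_forest_induct) auto

definition ranked_after :: "nat list list \<Rightarrow> nat list \<Rightarrow> nat \<Rightarrow> bool" where
  "ranked_after G DS i \<longleftrightarrow>
     (\<exists>c<i. \<exists>p<length (G ! c). G ! c ! p = hd (G ! i) - 1 \<and> DS ! i = DS ! c + p)"

lemma fold_append_upt_eq_take:
  "n \<le> length DS \<Longrightarrow> (\<And>i. i < length DS \<Longrightarrow> g (take i DS) i = DS ! i)
    \<Longrightarrow> fold (\<lambda>i ds. ds @ [g ds i]) [0..<n] [] = take n DS"
  by (induction n) (simp_all add: take_Suc_conv_app_nth)

lemma distinct_concat_nth_unique:
  "distinct (concat G) \<Longrightarrow> i < length G \<Longrightarrow> j < length G \<Longrightarrow> x \<in> set (G ! i) \<Longrightarrow> x \<in> set (G ! j) \<Longrightarrow> i = j"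
proof (induction G arbitrary: i j)
  case (Cons a G)
  have disjoint: "x \<notin> set a" if "k < length G" "x \<in> set (G ! k)" for k x
    using Cons.prems(1) nth_mem[OF that(1)] that(2) by auto
  show ?case
    using Cons disjoint[of "i - 1" x] disjoint[of "j - 1" x] by (cases i; cases j) auto
qed simp

lemma depth_seq_eq:
  assumes G: "eta u w = G" "distinct (concat G)" "length G = length u"
    and DS: "length DS = length u" "0 < length u \<Longrightarrow> DS ! 0 = 0"
    and ranked: "\<And>i. 0 < i \<Longrightarrow> i < length u \<Longrightarrow> ranked_after G DS i"
  shows "depth_seq u w = DS"
proof -
  define g where "g = (\<lambda>ds i. if i = 0 then 0 else
    (let A = hd (G ! i) - 1;
         c = (LEAST c. c < length u \<and> A \<in> set (G ! c));
         p = (LEAST p. p < length (G ! c) \<and> G ! c ! p = A)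
     in ds ! c + (p :: nat)))"
  have "g (take i DS) i = DS ! i" if i: "i < length DS" for i
  proof (cases "i = 0")
    case False
    then obtain c p where
      cp: "c < i" "p < length (G ! c)" "G ! c ! p = hd (G ! i) - 1" "DS ! i = DS ! c + p"
      using ranked[of i] i DS(1) unfolding ranked_after_def by auto
    define A where "A = hd (G ! i) - 1"
    have A: "A \<in> set (G ! c)" using cp nth_mem[OF cp(2)] by (simp add: A_def)
    have c: "c < length u" using cp i DS(1) by simp
    have "(LEAST c. c < length u \<and> A \<in> set (G ! c)) = c"
    proof (rule Least_equality)
      show "c < length u \<and> A \<in> set (G ! c)" using A c by simp
    next
      fix c' assume "c' < length u \<and> A \<in> set (G ! c')"
      then show "c \<le> c'" using distinct_concat_nth_unique[OF G(2), of c' c A] A c G(3) by simp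
    qed
    moreover have "(LEAST p'. p' < length (G ! c) \<and> G ! c ! p' = A) = p"
    proof (rule Least_equality)
      show "p < length (G ! c) \<and> G ! c ! p = A" using cp by (simp add: A_def)
    next
      fix p' assume p': "p' < length (G ! c) \<and> G ! c ! p' = A"
      have "distinct (G ! c)" using G(2,3) c by (simp add: distinct_concat_iff)
      then show "p \<le> p'" using p' cp nth_eq_iff_index_eq[of "G ! c" p' p] by (simp add: A_def)
    qed
    ultimately show ?thesis using False cp by (simp add: g_def A_def Let_def)
  qed (use DS i in \<open>simp add: g_def\<close>)
  then have "fold (\<lambda>i ds. ds @ [g ds i]) [0..<length u] [] = DS"
    using fold_append_upt_eq_take[of "length u" DS g] DS(1) by simp
  then show ?thesis unfolding depth_seq_def G(1) g_def Let_def .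
qed

lemma first_column_depth:
  "t \<noteq> Leaf \<Longrightarrow> 0 < length (labels t) \<and> hd (columns e t ! 0) = e \<and> depths d t ! 0 = d"
  by (cases t) auto

definition ranked_tree_spec :: "nat list list \<Rightarrow> nat list \<Rightarrow> ptree \<Rightarrow> bool" where
  "ranked_tree_spec G DS t \<longleftrightarrow> (\<forall>G0 G' D0 D' e d. length D0 = length G0
     \<longrightarrow> G = G0 @ columns e t @ G' \<longrightarrow> DS = D0 @ depths d t @ D'
     \<longrightarrow> (\<forall>i. length G0 < i \<longrightarrow> i < length G0 + length (labels t) \<longrightarrow> ranked_after G DS i))"

definition ranked_forest_spec :: "nat list list \<Rightarrow> nat list \<Rightarrow> ptree list \<Rightarrow> bool" where
  "ranked_forest_spec G DS ts \<longleftrightarrow> (\<forall>G0 G' D0 D' e d c p0 rest. length D0 = length G0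
     \<longrightarrow> c < length G0 \<longrightarrow> DS ! c = d \<longrightarrow> drop p0 (G ! c) = fst (forest_columns e ts) @ rest
     \<longrightarrow> G = G0 @ snd (forest_columns e ts) @ G' \<longrightarrow> DS = D0 @ forest_depths (d + p0) ts @ D'
     \<longrightarrow> (\<forall>i. length G0 \<le> i \<longrightarrow> i < length G0 + length (forest_labels ts) \<longrightarrow> ranked_after G DS i))"

lemma ranked_tree_spec_Node:
  assumes IH: "ranked_tree_spec G DS t0" "ranked_forest_spec G DS ts"
  shows "ranked_tree_spec G DS (Node u t0 ts)"
  unfolding ranked_tree_spec_def
proof (intro allI impI)
  fix G0 G' D0 D' e d i
  assume len: "length D0 = length G0" and G: "G = G0 @ columns e (Node u t0 ts) @ G'"
    and DS: "DS = D0 @ depths d (Node u t0 ts) @ D'"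
    and i: "length G0 < i" "i < length G0 + length (labels (Node u t0 ts))"
  define e' where "e' = e + 1 + length (tree_word t0)"
  define col where "col = e # fst (forest_columns e' ts)"
  define n0 where "n0 = length (labels t0)"
  have G_c: "G ! length G0 = col" and DS_c: "DS ! length G0 = d"
    using G DS len by (simp_all add: col_def e'_def nth_append)
  consider "i = Suc (length G0)" "t0 \<noteq> Leaf" | "Suc (length G0) < i" "i < Suc (length G0) + n0"
    | "Suc (length G0) + n0 \<le> i"
    using i by (cases "t0 = Leaf"; cases "i = Suc (length G0)"; cases "i < Suc (length G0) + n0")
      (auto simp: n0_def)
  then show "ranked_after G DS i"
  proof cases
    case 1
    have "G ! i = columns (Suc e) t0 ! 0" "DS ! i = depths d t0 ! 0"
      using G DS len 1 first_column_depth[of t0] length_columns(1) length_depths(1)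
      by (simp_all add: nth_append)
    then show ?thesis
      unfolding ranked_after_def
      using 1 G_c DS_c first_column_depth[of t0 "Suc e" d] length_columns(1)
      by (intro exI[of _ "length G0"] conjI exI[of _ 0]) (auto simp: col_def)
  next
    case 2
    then show ?thesis
      using IH(1)[unfolded ranked_tree_spec_def, rule_format, of "D0 @ [d]" "G0 @ [col]" "Suc e"
          "snd (forest_columns e' ts) @ G'" d "forest_depths (Suc d) ts @ D'" i] G DS len
      by (simp add: col_def e'_def n0_def)
  next
    case 3
    then show ?thesis
      using IH(2)[unfolded ranked_forest_spec_def, rule_format, of "D0 @ d # depths d t0"
          "G0 @ col # columns (Suc e) t0" "length G0" d 1 e' "[]" G' D' i]
        G DS len i G_c DS_c length_columns(1) length_depths(1)
      by (simp add: col_def e'_def n0_def)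
  qed
qed

lemma ranked_forest_spec_Cons:
  assumes IH: "ranked_tree_spec G DS t" "ranked_forest_spec G DS ts"
  shows "ranked_forest_spec G DS (t # ts)"
  unfolding ranked_forest_spec_def
proof (intro allI impI)
  fix G0 G' D0 D' e d c p0 rest i
  assume len: "length D0 = length G0" and c: "c < length G0" and DS_c: "DS ! c = d"
    and col: "drop p0 (G ! c) = fst (forest_columns e (t # ts)) @ rest"
    and G: "G = G0 @ snd (forest_columns e (t # ts)) @ G'"
    and DS: "DS = D0 @ forest_depths (d + p0) (t # ts) @ D'"
    and i: "length G0 \<le> i" "i < length G0 + length (forest_labels (t # ts))"
  define e' where "e' = e + 1 + length (tree_word t)"
  define nt where "nt = length (labels t)"
  have "drop p0 (G ! c) \<noteq> []" using col by simp
  then have p0: "p0 < length (G ! c)" by simp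
  then have "G ! c ! p0 = e" using col hd_drop_conv_nth[of p0 "G ! c"] by simp
  consider "i = length G0" "t \<noteq> Leaf" | "length G0 < i" "i < length G0 + nt" | "length G0 + nt \<le> i"
    using i
    by (cases "t = Leaf"; cases "i = length G0"; cases "i < length G0 + nt") (auto simp: nt_def)
  then show "ranked_after G DS i"
  proof cases
    case 1
    have "G ! i = columns (Suc e) t ! 0" "DS ! i = depths (d + p0) t ! 0"
      using G DS len 1 first_column_depth[of t] length_columns(1) length_depths(1)
      by (simp_all add: nth_append)
    then show ?thesis
      unfolding ranked_after_def
      using 1 c p0 \<open>G ! c ! p0 = e\<close> DS_c first_column_depth[of t "Suc e" "d + p0"]
      by (intro exI[of _ c] conjI exI[of _ p0]) auto
  next
    case 2
    then show ?thesis
      using IH(1)[unfolded ranked_tree_spec_def, rule_format, of D0 G0 "Suc e"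
          "snd (forest_columns e' ts) @ G'" "d + p0" "forest_depths (Suc (d + p0)) ts @ D'" i] G DS len
      by (simp add: e'_def nt_def)
  next
    case 3
    have "drop (Suc p0) (G ! c) = fst (forest_columns e' ts) @ rest"
      using col by (simp add: e'_def drop_Suc tl_drop[symmetric])
    then show ?thesis
      using 3 IH(2)[unfolded ranked_forest_spec_def, rule_format, of "D0 @ depths (d + p0) t"
          "G0 @ columns (Suc e) t" c d "Suc p0" e' rest G' D' i]
        G DS len i c DS_c length_columns(1) length_depths(1)
      by (simp add: e'_def nt_def)
  qed
qed

lemma ranked_spec: "ranked_tree_spec G DS t" "ranked_forest_spec G DS ts"
proof (induct t and ts rule: ptree_forest_induct)
  case (Node u t0 ts)
  then show ?case by (rule ranked_tree_spec_Node)
next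
  case (Cons t ts)
  then show ?case by (rule ranked_forest_spec_Cons)
qed (auto simp: ranked_tree_spec_def ranked_forest_spec_def)

lemma depth_seq_tree_word:
  assumes "wf_tree t"
  shows "depth_seq (labels t) (tree_word t) = depths 0 t"
proof (rule depth_seq_eq)
  show "eta (labels t) (tree_word t) = columns 1 t" using assms by (rule eta_tree_word)
  show "distinct (concat (columns 1 t))" by (rule distinct_concat_columns)
  show "length (columns 1 t) = length (labels t)" "length (depths 0 t) = length (labels t)"
    by (simp_all add: length_columns(1) length_depths(1))
  show "0 < length (labels t) \<Longrightarrow> depths 0 t ! 0 = 0"
    using first_column_depth[of t] by (cases t) auto
  show "ranked_after (columns 1 t) (depths 0 t) i" if "0 < i" "i < length (labels t)" for i
    using ranked_spec(1)[of "columns 1 t" "depths 0 t" t, unfolded ranked_tree_spec_def, rule_format,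
        of "[]" "[]" 1 "[]" 0 "[]" i] that
    by simp
qed

section \<open>Mirroring trees\<close>

primrec tree_depth :: "nat \<Rightarrow> ptree \<Rightarrow> nat" and forest_depth :: "nat \<Rightarrow> ptree list \<Rightarrow> nat" where
  "tree_depth d Leaf = 0"
| "tree_depth d (Node u t0 ts) = d + tree_depth d t0 + forest_depth (Suc d) ts"
| "forest_depth d [] = 0"
| "forest_depth d (t # ts) = tree_depth d t + forest_depth (Suc d) ts"

lemma sum_list_depths:
  "\<forall>d. sum_list (depths d t) = tree_depth d t"
  "\<forall>d. sum_list (forest_depths d ts) = forest_depth d ts"
  by (induct t and ts rule: ptree_forest_induct) auto

lemma depth_tree_word: "wf_tree t \<Longrightarrow> depth (labels t) (tree_word t) = tree_depth 0 t"
  by (simp add: depth_def depth_seq_tree_word sum_list_depths(1))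

lemma tree_area_Node:
  "tree_area r (Node u t0 ts) = r + (\<Sum>p<Suc (length ts). tree_area (r + int u - int p) ((t0 # ts) ! p))"
proof -
  have "forest_area r ts = (\<Sum>p<length ts. tree_area (r - 1 - int p) (ts ! p))" for r
    by (induction ts arbitrary: r)
      (simp_all add: sum.lessThan_Suc_shift algebra_simps del: sum.lessThan_Suc)
  then show ?thesis by (simp add: sum.lessThan_Suc_shift algebra_simps del: sum.lessThan_Suc)
qed

lemma tree_depth_Node:
  "tree_depth d (Node u t0 ts) = d + (\<Sum>p<Suc (length ts). tree_depth (d + p) ((t0 # ts) ! p))"
proof -
  have "forest_depth d ts = (\<Sum>p<length ts. tree_depth (d + p) (ts ! p))" for d
    by (induction ts arbitrary: d) (simp_all add: sum.lessThan_Suc_shift del: sum.lessThan_Suc)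
  then show ?thesis by (simp add: sum.lessThan_Suc_shift del: sum.lessThan_Suc)
qed

primrec mirror :: "ptree \<Rightarrow> ptree" where
  "mirror Leaf = Leaf"
| "mirror (Node u t0 ts) =
    Node u (hd (rev (mirror t0 # map mirror ts))) (tl (rev (mirror t0 # map mirror ts)))"

lemma mirror_Node:
  obtains t0' ts' where "rev (map mirror (t0 # ts)) = t0' # ts'"
    "mirror (Node u t0 ts) = Node u t0' ts'"
  using that by (cases "rev (map mirror (t0 # ts))") auto

lemma mirror_mirror [simp]: "mirror (mirror t) = t"
proof (induction t)
  case (Node u t0 ts)
  obtain t0' ts' where children: "rev (map mirror (t0 # ts)) = t0' # ts'"
    and mirror: "mirror (Node u t0 ts) = Node u t0' ts'" by (rule mirror_Node)
  have "map mirror (rev (t0' # ts')) = t0 # ts"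
    using Node.IH unfolding children[symmetric] by (simp add: rev_map[symmetric] map_idI)
  then have "rev (map mirror (t0' # ts')) = t0 # ts" by (simp add: rev_map)
  then show ?case unfolding mirror by simp
qed simp

lemma wf_forest_iff: "wf_forest ts \<longleftrightarrow> (\<forall>t\<in>set ts. wf_tree t)"
  by (induction ts) auto

lemma wf_tree_mirror: "wf_tree t \<Longrightarrow> wf_tree (mirror t)"
proof (induction t)
  case (Node u t0 ts)
  obtain t0' ts' where children: "rev (map mirror (t0 # ts)) = t0' # ts'"
    and mirror: "mirror (Node u t0 ts) = Node u t0' ts'" by (rule mirror_Node)
  have "\<forall>x\<in>set (t0' # ts'). wf_tree x"
    unfolding children[symmetric] using Node by (auto simp: wf_forest_iff)
  moreover have "length ts' = u" using Node.prems arg_cong[OF children, of length] by simp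
  ultimately show ?case unfolding mirror by (simp add: wf_forest_iff)
qed simp

lemma mset_labels_mirror: "mset (labels (mirror t)) = mset (labels t)"
proof (induction t)
  case (Node u t0 ts)
  obtain t0' ts' where children: "rev (map mirror (t0 # ts)) = t0' # ts'"
    and mirror: "mirror (Node u t0 ts) = Node u t0' ts'" by (rule mirror_Node)
  have mset_labels: "mset (labels (Node u x xs)) = add_mset u (\<Sum>y\<leftarrow>x # xs. mset (labels y))" for x xs
  proof -
    have "forest_labels xs = concat (map labels xs)" by (induction xs) auto
    then show ?thesis by (simp add: mset_concat comp_def)
  qed
  have "mset (labels (mirror (Node u t0 ts)))
      = add_mset u (\<Sum>y\<leftarrow>rev (map mirror (t0 # ts)). mset (labels y))"
    unfolding mirror children by (rule mset_labels)
  also have "\<dots> = add_mset u (\<Sum>y\<leftarrow>t0 # ts. mset (labels (mirror y)))"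
    by (simp add: rev_map[symmetric] sum_list_rev comp_def)
  also have "\<dots> = mset (labels (Node u t0 ts))"
    unfolding mset_labels using Node.IH by (simp cong: map_cong)
  finally show ?case .
qed simp

text \<open>The child at position \<open>p\<close> of a node with label \<open>u\<close> and \<open>u + 1\<close> children starts at
  rank \<open>r + u - p\<close> and has depth label \<open>d + p\<close>; mirroring replaces \<open>p\<close> by \<open>u - p\<close>.\<close>
lemma tree_area_mirror: "wf_tree t \<Longrightarrow> tree_area (int d) (mirror t) = int (tree_depth d t)"
proof (induction t arbitrary: d)
  case (Node u t0 ts)
  obtain t0' ts' where children: "rev (map mirror (t0 # ts)) = t0' # ts'"
    and mirror: "mirror (Node u t0 ts) = Node u t0' ts'" by (rule mirror_Node)
  define cs where "cs = t0 # ts"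
  have len: "length cs = Suc u" "length ts' = u"
    using Node.prems arg_cong[OF children, of length] by (simp_all add: cs_def)
  have IH: "tree_area (int d) (mirror c) = int (tree_depth d c)" if "c \<in> set cs" for c d
    using Node that by (auto simp: cs_def wf_forest_iff)
  have "tree_area (int d) (mirror (Node u t0 ts))
      = int d + (\<Sum>p<Suc u. tree_area (int (d + (u - p))) (mirror (cs ! (u - p))))"
  proof -
    have "(t0' # ts') ! p = mirror (cs ! (u - p))" if "p < Suc u" for p
      using that len(1) unfolding children[symmetric] cs_def[symmetric] by (simp add: rev_nth)
    then show ?thesis unfolding mirror tree_area_Node len(2)
      by (intro arg_cong2[where f = "(+)"] sum.cong) auto
  qed
  also have "\<dots> = int d + (\<Sum>p<Suc u. tree_area (int (d + p)) (mirror (cs ! p)))"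
    using sum.nat_diff_reindex[where g = "\<lambda>p. tree_area (int (d + p)) (mirror (cs ! p))"
        and n = "Suc u"]
    by simp
  also have "\<dots> = int d + (\<Sum>p<Suc u. int (tree_depth (d + p) (cs ! p)))"
    using len(1) by (intro arg_cong2[where f = "(+)"] sum.cong refl IH) auto
  also have "\<dots> = int (tree_depth d (Node u t0 ts))"
    unfolding tree_depth_Node using Node.prems by (simp add: cs_def)
  finally show ?case .
qed simp

section \<open>Symmetry\<close>

lemma finite_dyck_paths: "finite (dyck_paths u)"
proof -
  have "dyck_paths u \<subseteq> {w. set w \<subseteq> {S, W} \<and> length w = sum_list u + length u}"
    by (auto simp: dyck_paths_def intro: letter.exhaust)
  then show ?thesis by (rule finite_subset) (simp add: finite_lists_length_eq)
qed

lemma finite_rearrangements: "finite {u. mset u = mset k}"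
proof -
  have "{u. mset u = mset k} \<subseteq> {u. set u \<subseteq> set k \<and> length u = length k}"
    by (auto dest: mset_eq_setD mset_eq_length)
  then show ?thesis by (rule finite_subset) (simp add: finite_lists_length_eq)
qed

lemma Ctilde_eq_sum_trees:
  "Ctilde k q t
     = (\<Sum>x\<in>{x. wf_tree x \<and> mset (labels x) = mset k}. q ^ nat (tree_area 0 x) * t ^ tree_depth 0 x)"
proof -
  define T where "T = {x. wf_tree x \<and> mset (labels x) = mset k}"
  define P where "P = Sigma {u. mset u = mset k} dyck_paths"
  have "bij_betw (\<lambda>x. (labels x, tree_word x)) T P"
  proof (rule bij_betwI')
    show "(labels x, tree_word x) = (labels y, tree_word y) \<longleftrightarrow> x = y" if "x \<in> T" "y \<in> T" for x y
      using that tree_word_inj by (auto simp: T_def)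
    show "(labels x, tree_word x) \<in> P" if "x \<in> T" for x
      using that tree_word_in_dyck_paths by (auto simp: T_def P_def)
    show "\<exists>x\<in>T. p = (labels x, tree_word x)" if "p \<in> P" for p
      using that dyck_path_is_tree_word by (auto simp: T_def P_def) metis
  qed
  then have "(\<Sum>(u, w)\<in>P. q ^ area u w * t ^ depth u w)
      = (\<Sum>x\<in>T. q ^ area (labels x) (tree_word x) * t ^ depth (labels x) (tree_word x))"
    by (simp add: sum.reindex_bij_betw[symmetric])
  moreover have "Ctilde k q t = (\<Sum>(u, w)\<in>P. q ^ area u w * t ^ depth u w)"
    unfolding Ctilde_def P_def
    by (rule sum.Sigma) (simp_all add: finite_rearrangements finite_dyck_paths)
  ultimately show ?thesis
    unfolding T_def by (auto simp: area_tree_word depth_tree_word intro!: sum.cong)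
qed

lemma bij_betw_mirror:
  "bij_betw mirror {x. wf_tree x \<and> mset (labels x) = mset k} {x. wf_tree x \<and> mset (labels x) = mset k}"
  by (rule bij_betw_byWitness[where f' = mirror]) (auto simp: wf_tree_mirror mset_labels_mirror)

theorem theorem1p2:
  fixes k :: "nat list" and q t :: "'a::comm_ring_1"
  assumes "\<forall>x \<in> set k. 0 < x"
  shows "Ctilde k q t = Ctilde k t q"
proof -
  define T where "T = {x. wf_tree x \<and> mset (labels x) = mset k}"
  have area_mirror: "tree_area 0 (mirror x) = int (tree_depth 0 x)"
    and depth_mirror: "tree_depth 0 (mirror x) = nat (tree_area 0 x)" if "x \<in> T" for x
    using that tree_area_mirror[of x 0] tree_area_mirror[of "mirror x" 0] wf_tree_mirror[of x]
    by (simp_all add: T_def)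
  have "Ctilde k q t = (\<Sum>x\<in>T. q ^ nat (tree_area 0 (mirror x)) * t ^ tree_depth 0 (mirror x))"
    unfolding Ctilde_eq_sum_trees T_def
    by (rule sum.reindex_bij_betw[OF bij_betw_mirror, symmetric])
  also have "\<dots> = (\<Sum>x\<in>T. t ^ nat (tree_area 0 x) * q ^ tree_depth 0 x)"
    by (rule sum.cong) (simp_all add: area_mirror depth_mirror mult.commute)
  also have "\<dots> = Ctilde k t q"
    by (simp add: Ctilde_eq_sum_trees T_def)
  finally show ?thesis .
qed

end
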